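(* Let $X$ be an infinite-dimensional real normed space. Then there exists an approximately convex set $A\subseteq X$ such that $\mathcal{H}(A,\operatorname{Co}(A))=\infty$.
   Context: A set $A\subseteq X$ is approximately convex if $d(tx+(1-t)y,A)\le 1$ for all $x,y\in A$ and $t\in[0,1]$, where $d(x,A)=\inf_{a\in A}\|x-a\|$. $\mathcal{H}(A,B)=\sup\{d(x,B),d(y,A):x\in A,y\in B\}$ is the Hausdorff distance and $\operatorname{Co}(A)$ the convex hull. *)

theory Defs
  imports "HOL-Analysis.Analysis"
begin

definition approx_convex :: "'a::real_normed_vector set \<Rightarrow> bool" where
  "approx_convex A \<longleftrightarrow>
     (\<forall>x\<in>A. \<forall>y\<in>A. \<forall>t::real. 0 \<le> t \<and> t \<le> 1 \<longrightarrow> infdist (t *\<^sub>R x + (1 - t) *\<^sub>R y) A \<le> 1)"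

definition hausdorff_ext :: "'a::metric_space set \<Rightarrow> 'a set \<Rightarrow> ereal" where
  "hausdorff_ext A B =
     sup (SUP x\<in>A. ereal (infdist x B)) (SUP y\<in>B. ereal (infdist y A))"

definition infinite_dimensional :: "'a::real_vector itself \<Rightarrow> bool" where
  "infinite_dimensional _ \<longleftrightarrow> (\<forall>B::'a set. finite B \<longrightarrow> span B \<noteq> UNIV)"

end

theory Submission
  imports Defs
begin

text \<open>Choose vectors \<open>v\<^sub>0, v\<^sub>1, \<dots>\<close> with \<open>\<parallel>v\<^sub>0\<parallel> = 1\<close> such that on every \<open>span {v\<^sub>0, \<dots>, v\<^sub>n\<^sub>-\<^sub>1}\<close>
  all coordinate functionals have norm at most 1.  The next vector is taken in a common
  kernel of norm-preserving extensions of these functionals; only finitely many one-dimensional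
  Hahn--Banach steps are needed to find it, because a second fresh direction can be used to cancel
  the value of an extension at the first one.

  Let \<open>A\<close> be the image of the finitely supported probability vectors \<open>x\<close> under
  \<open>x \<mapsto> H(x) v\<^sub>0 + \<Sum>\<^sub>i x\<^sub>i (i+1) v\<^sub>i\<^sub>+\<^sub>1\<close>, where \<open>H\<close> is the Shannon entropy.  The linear part commutes with
  convex combinations and the concavity defect of \<open>H\<close> lies in \<open>[0, 1]\<close>, so \<open>A\<close> is approximately
  convex.  The barycentre of the \<open>m\<close> vertices \<open>(i+1) v\<^sub>i\<^sub>+\<^sub>1\<close>, \<open>p \<le> i < p + m\<close>, lies in the convex hull.
  A point of \<open>A\<close> either has some of these coordinates off from \<open>1/m\<close> by \<open>1/(2m)\<close>, which costs
  \<open>(p+1)/(2m)\<close> in norm, or has all of them close to \<open>1/m\<close>, which forces entropy at least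
  \<open>ln (2m/3) / 2\<close>.  Taking \<open>p = 2mn\<close> and \<open>m\<close> large, the barycentre is at distance at least \<open>n\<close> from \<open>A\<close>.\<close>

definition norm_dominated_on :: "'a::real_normed_vector set \<Rightarrow> ('a \<Rightarrow> real) \<Rightarrow> bool" where
  "norm_dominated_on V \<phi> \<longleftrightarrow>
     (\<forall>u\<in>V. \<forall>w\<in>V. \<phi> (u + w) = \<phi> u + \<phi> w) \<and> (\<forall>r. \<forall>u\<in>V. \<phi> (r *\<^sub>R u) = r * \<phi> u) \<and>
     (\<forall>u\<in>V. \<phi> u \<le> norm u)"

lemma norm_dominated_onD:
  assumes "norm_dominated_on V \<phi>"
  shows "u \<in> V \<Longrightarrow> w \<in> V \<Longrightarrow> \<phi> (u + w) = \<phi> u + \<phi> w"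
    and "u \<in> V \<Longrightarrow> \<phi> (r *\<^sub>R u) = r * \<phi> u"
    and "u \<in> V \<Longrightarrow> \<phi> u \<le> norm u"
  using assms unfolding norm_dominated_on_def by blast+

lemma norm_dominated_on_minus:
  assumes "norm_dominated_on V \<phi>" "u \<in> V"
  shows "\<phi> (- u) = - \<phi> u"
  using norm_dominated_onD(2)[OF assms, of "-1"] by simp

lemma norm_dominated_extension_constant:
  assumes V: "subspace V" and \<phi>: "norm_dominated_on V \<phi>"
  obtains c where "\<And>u t. u \<in> V \<Longrightarrow> \<phi> u + t * c \<le> norm (u + t *\<^sub>R y)"
proof -
  have key: "\<phi> u - norm (u - y) \<le> norm (u' + y) - \<phi> u'" if "u \<in> V" "u' \<in> V" for u u'
  proof -
    have "\<phi> u + \<phi> u' = \<phi> (u + u')" by (simp add: norm_dominated_onD(1)[OF \<phi> that])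
    also have "\<dots> \<le> norm (u + u')" by (rule norm_dominated_onD(3)[OF \<phi> subspace_add[OF V that]])
    also have "\<dots> \<le> norm (u - y) + norm (u' + y)"
      using norm_triangle_ineq[of "u - y" "u' + y"] by simp
    finally show ?thesis by simp
  qed
  define c where "c = Sup ((\<lambda>u. \<phi> u - norm (u - y)) ` V)"
  have c_ge: "\<phi> u - norm (u - y) \<le> c" if "u \<in> V" for u
    unfolding c_def using that key[of _ 0] subspace_0[OF V]
    by (intro cSup_upper) (auto simp: bdd_above_def)
  have c_le: "c \<le> norm (u + y) - \<phi> u" if "u \<in> V" for u
    unfolding c_def using that key subspace_0[OF V] by (intro cSup_least) auto
  have "\<phi> u + t * c \<le> norm (u + t *\<^sub>R y)" if u: "u \<in> V" for u t
  proof (cases t "0::real" rule: linorder_cases)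
    case less
    have u': "(- 1 / t) *\<^sub>R u \<in> V" by (rule subspace_scale[OF V u])
    have eq: "(- 1 / t) *\<^sub>R u - y = (- 1 / t) *\<^sub>R (u + t *\<^sub>R y)" using less by (simp add: algebra_simps)
    have "(- 1 / t) * \<phi> u - \<bar>- 1 / t\<bar> * norm (u + t *\<^sub>R y) \<le> c"
      using c_ge[OF u'] unfolding norm_dominated_onD(2)[OF \<phi> u] eq norm_scaleR .
    with less show ?thesis by (simp add: field_simps)
  next
    case greater
    have u': "(1 / t) *\<^sub>R u \<in> V" by (rule subspace_scale[OF V u])
    have eq: "(1 / t) *\<^sub>R u + y = (1 / t) *\<^sub>R (u + t *\<^sub>R y)" using greater by (simp add: algebra_simps)
    have "c \<le> \<bar>1 / t\<bar> * norm (u + t *\<^sub>R y) - (1 / t) * \<phi> u"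
      using c_le[OF u'] unfolding norm_dominated_onD(2)[OF \<phi> u] eq norm_scaleR .
    with greater show ?thesis by (simp add: field_simps)
  qed (use norm_dominated_onD(3)[OF \<phi>] u in simp)
  then show thesis using that by blast
qed

lemma span_insertE:
  assumes "w \<in> span (insert y S)"
  obtains u t where "u \<in> span S" "w = u + t *\<^sub>R y"
proof -
  obtain t where "w - t *\<^sub>R y \<in> span S" using assms span_insert[of y S] by blast
  then show thesis using that[of "w - t *\<^sub>R y" t] by simp
qed

lemma span_insert_decomposition_unique:
  assumes y: "y \<notin> span S" and "u \<in> span S" "u' \<in> span S" and eq: "u + t *\<^sub>R y = u' + t' *\<^sub>R y"
  shows "u = u'" "t = t'"
proof -
  have "(t - t') *\<^sub>R y = u' - u"
    using eq by (metis add_diff_cancel_left add_diff_cancel_right scaleR_left_diff_distrib)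
  then have "(t - t') *\<^sub>R y \<in> span S" by (simp add: span_diff \<open>u \<in> span S\<close> \<open>u' \<in> span S\<close>)
  then have "(1 / (t - t')) *\<^sub>R (t - t') *\<^sub>R y \<in> span S" if "t \<noteq> t'" by (rule span_scale)
  with y show "t = t'" by force
  with eq show "u = u'" by simp
qed

lemma norm_dominated_extension:
  assumes \<phi>: "norm_dominated_on (span S) \<phi>" and y: "y \<notin> span S"
    and c: "\<And>u t. u \<in> span S \<Longrightarrow> \<phi> u + t * c \<le> norm (u + t *\<^sub>R y)"
  obtains \<psi> where "norm_dominated_on (span (insert y S)) \<psi>"
    and "\<And>u t. u \<in> span S \<Longrightarrow> \<psi> (u + t *\<^sub>R y) = \<phi> u + t * c"
proof -
  have "\<forall>w. \<exists>r. \<forall>u\<in>span S. \<forall>t. w = u + t *\<^sub>R y \<longrightarrow> r = \<phi> u + t * c"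
    using span_insert_decomposition_unique[OF y] by metis
  then obtain \<psi> where \<psi>: "\<And>u t. u \<in> span S \<Longrightarrow> \<psi> (u + t *\<^sub>R y) = \<phi> u + t * c"
    by metis
  have "norm_dominated_on (span (insert y S)) \<psi>"
    unfolding norm_dominated_on_def
  proof (intro conjI ballI allI)
    fix w w' assume "w \<in> span (insert y S)" "w' \<in> span (insert y S)"
    then obtain u t u' t' where u: "u \<in> span S" "w = u + t *\<^sub>R y" and u': "u' \<in> span S" "w' = u' + t' *\<^sub>R y"
      by (metis span_insertE)
    then have "w + w' = (u + u') + (t + t') *\<^sub>R y" by (simp add: algebra_simps)
    then have "\<psi> (w + w') = \<phi> (u + u') + (t + t') * c" by (simp add: \<psi> span_add u(1) u'(1))
    moreover have "\<psi> w = \<phi> u + t * c" "\<psi> w' = \<phi> u' + t' * c" using \<psi> u u' by simp_all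
    ultimately show "\<psi> (w + w') = \<psi> w + \<psi> w'"
      by (simp add: norm_dominated_onD(1)[OF \<phi> u(1) u'(1)] distrib_right)
  next
    fix r w assume "w \<in> span (insert y S)"
    then obtain u t where u: "u \<in> span S" "w = u + t *\<^sub>R y" by (metis span_insertE)
    then have "r *\<^sub>R w = r *\<^sub>R u + (r * t) *\<^sub>R y" by (simp add: algebra_simps)
    then have "\<psi> (r *\<^sub>R w) = \<phi> (r *\<^sub>R u) + (r * t) * c" by (simp add: \<psi> span_scale u(1))
    moreover have "\<psi> w = \<phi> u + t * c" using \<psi> u by simp
    ultimately show "\<psi> (r *\<^sub>R w) = r * \<psi> w"
      by (simp add: norm_dominated_onD(2)[OF \<phi> u(1)] algebra_simps)
  next
    fix w assume "w \<in> span (insert y S)"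
    then obtain u t where "u \<in> span S" "w = u + t *\<^sub>R y" by (metis span_insertE)
    then show "\<psi> w \<le> norm w" by (simp add: \<psi> c)
  qed
  with \<psi> show thesis using that by blast
qed

lemma norm_dominated_zero_extension_combination:
  assumes ext: "\<And>u s. u \<in> span S \<Longrightarrow> \<phi>\<^sub>1 (u + s *\<^sub>R x\<^sub>1) = \<phi> u + s * c\<^sub>1"
    and dom: "\<And>w t. w \<in> span (insert x\<^sub>1 S) \<Longrightarrow> \<phi>\<^sub>1 w + t * c\<^sub>2 \<le> norm (w + t *\<^sub>R x\<^sub>2)"
    and k: "k * c\<^sub>1 = c\<^sub>2" and u: "u \<in> span S"
  shows "\<phi> u \<le> norm (u + t *\<^sub>R (x\<^sub>2 - k *\<^sub>R x\<^sub>1))"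
proof -
  define w where "w = u + (- (t * k)) *\<^sub>R x\<^sub>1"
  have "w \<in> span (insert x\<^sub>1 S)"
    unfolding w_def using u by (intro span_add span_scale) (auto intro: span_base span_mono[THEN subsetD])
  from dom[OF this, of t] have "\<phi> u - t * (k * c\<^sub>1) + t * c\<^sub>2 \<le> norm (w + t *\<^sub>R x\<^sub>2)"
    unfolding w_def ext[OF u] by (simp add: algebra_simps)
  also have "w + t *\<^sub>R x\<^sub>2 = u + t *\<^sub>R (x\<^sub>2 - k *\<^sub>R x\<^sub>1)" by (simp add: w_def algebra_simps)
  finally show ?thesis using k by simp
qed

lemma norm_dominated_zero_extensions:
  assumes "\<And>\<phi>. \<phi> \<in> F \<Longrightarrow> norm_dominated_on (span S) \<phi>" "x \<notin> span S"
    and "\<And>\<phi> u t. \<phi> \<in> F \<Longrightarrow> u \<in> span S \<Longrightarrow> \<phi> u \<le> norm (u + t *\<^sub>R x)"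
  obtains ext where "\<forall>\<phi>\<in>F. norm_dominated_on (span (insert x S)) (ext \<phi>)"
    and "\<forall>\<phi>\<in>F. \<forall>u\<in>span S. \<forall>t. ext \<phi> (u + t *\<^sub>R x) = \<phi> u"
proof -
  have "\<forall>\<phi>\<in>F. \<exists>\<phi>'. norm_dominated_on (span (insert x S)) \<phi>' \<and>
      (\<forall>u\<in>span S. \<forall>t. \<phi>' (u + t *\<^sub>R x) = \<phi> u)"
  proof
    fix \<phi> assume "\<phi> \<in> F"
    with assms(3) have "\<And>u t. u \<in> span S \<Longrightarrow> \<phi> u + t * 0 \<le> norm (u + t *\<^sub>R x)" by simp
    then obtain \<phi>' where "norm_dominated_on (span (insert x S)) \<phi>'"
      "\<And>u t. u \<in> span S \<Longrightarrow> \<phi>' (u + t *\<^sub>R x) = \<phi> u + t * 0"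
      using norm_dominated_extension[OF assms(1)[OF \<open>\<phi> \<in> F\<close>] assms(2)] by blast
    then show "\<exists>\<phi>'. norm_dominated_on (span (insert x S)) \<phi>' \<and>
        (\<forall>u\<in>span S. \<forall>t. \<phi>' (u + t *\<^sub>R x) = \<phi> u)" by auto
  qed
  then have "\<exists>ext. \<forall>\<phi>\<in>F. norm_dominated_on (span (insert x S)) (ext \<phi>) \<and>
      (\<forall>u\<in>span S. \<forall>t. ext \<phi> (u + t *\<^sub>R x) = \<phi> u)" by (rule bchoice)
  then show thesis using that by auto
qed

text \<open>The functionals of \<open>F\<close> extend by zero along both \<open>x\<^sub>1\<close> and \<open>x\<^sub>2\<close>; \<open>\<psi>\<close> only extends with values
  \<open>c\<^sub>1\<close> and \<open>c\<^sub>2\<close>, which cancel along \<open>x\<^sub>2 - (c\<^sub>2/c\<^sub>1) x\<^sub>1\<close>.\<close>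
lemma common_zero_extension_direction_step:
  assumes x\<^sub>1: "x\<^sub>1 \<notin> span S" and x\<^sub>2: "x\<^sub>2 \<notin> span (insert x\<^sub>1 S)"
    and \<psi>_x\<^sub>1: "\<And>u t. u \<in> span S \<Longrightarrow> \<psi> u + t * c\<^sub>1 \<le> norm (u + t *\<^sub>R x\<^sub>1)"
    and \<psi>\<^sub>1: "\<And>u t. u \<in> span S \<Longrightarrow> \<psi>\<^sub>1 (u + t *\<^sub>R x\<^sub>1) = \<psi> u + t * c\<^sub>1"
    and \<psi>\<^sub>1_x\<^sub>2: "\<And>w t. w \<in> span (insert x\<^sub>1 S) \<Longrightarrow> \<psi>\<^sub>1 w + t * c\<^sub>2 \<le> norm (w + t *\<^sub>R x\<^sub>2)"
    and F_x\<^sub>1: "\<forall>\<phi>\<in>F. \<forall>u\<in>span S. \<forall>t. \<phi> u \<le> norm (u + t *\<^sub>R x\<^sub>1)"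
    and ext: "\<forall>\<phi>\<in>F. \<forall>u\<in>span S. \<forall>t. ext \<phi> (u + t *\<^sub>R x\<^sub>1) = \<phi> u"
    and ext_x\<^sub>2: "\<forall>\<phi>\<in>F. \<forall>w\<in>span (insert x\<^sub>1 S). \<forall>t. ext \<phi> w \<le> norm (w + t *\<^sub>R x\<^sub>2)"
  shows "\<exists>x. x \<notin> span S \<and> (\<forall>\<phi>\<in>insert \<psi> F. \<forall>u\<in>span S. \<forall>t. \<phi> u \<le> norm (u + t *\<^sub>R x))"
proof (cases "c\<^sub>1 = 0")
  case True
  with x\<^sub>1 \<psi>_x\<^sub>1 F_x\<^sub>1 show ?thesis by auto
next
  case False
  define x where "x = x\<^sub>2 - (c\<^sub>2 / c\<^sub>1) *\<^sub>R x\<^sub>1"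
  have "x \<notin> span S"
  proof
    assume "x \<in> span S"
    then have "x + (c\<^sub>2 / c\<^sub>1) *\<^sub>R x\<^sub>1 \<in> span (insert x\<^sub>1 S)"
      by (intro span_add span_scale) (auto intro: span_base span_mono[THEN subsetD])
    with x\<^sub>2 show False by (simp add: x_def)
  qed
  moreover have "\<psi> u \<le> norm (u + t *\<^sub>R x)" if "u \<in> span S" for u t
    unfolding x_def using False that
    by (intro norm_dominated_zero_extension_combination[OF \<psi>\<^sub>1 \<psi>\<^sub>1_x\<^sub>2]) auto
  moreover have "\<phi> u \<le> norm (u + t *\<^sub>R x)" if "\<phi> \<in> F" "u \<in> span S" for \<phi> u t
    unfolding x_def using that ext_x\<^sub>2
    by (intro norm_dominated_zero_extension_combination[where \<phi>\<^sub>1 = "ext \<phi>" and c\<^sub>1 = 0 and c\<^sub>2 = 0])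
      (auto simp: ext)
  ultimately show ?thesis by blast
qed

lemma exists_common_zero_extension_direction:
  fixes S :: "'a::real_normed_vector set"
  assumes inf: "infinite_dimensional TYPE('a)"
  shows "finite S \<Longrightarrow> \<forall>\<phi>\<in>set fs. norm_dominated_on (span S) \<phi> \<Longrightarrow>
    \<exists>x. x \<notin> span S \<and> (\<forall>\<phi>\<in>set fs. \<forall>u\<in>span S. \<forall>t. \<phi> u \<le> norm (u + t *\<^sub>R x))"
proof (induction fs arbitrary: S rule: length_induct)
  case (1 fs)
  have IH: "\<exists>x. x \<notin> span T \<and> (\<forall>\<phi>\<in>set ys. \<forall>u\<in>span T. \<forall>t. \<phi> u \<le> norm (u + t *\<^sub>R x))"
    if "length ys < length fs" "finite T" "\<forall>\<phi>\<in>set ys. norm_dominated_on (span T) \<phi>"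
    for ys and T :: "'a set"
    using "1.IH" that by blast
  show ?case
  proof (cases fs)
    case Nil
    with inf "1.prems"(1) show ?thesis unfolding infinite_dimensional_def by auto
  next
    case (Cons \<psi> fs')
    have \<psi>: "norm_dominated_on (span S) \<psi>" and fs': "\<forall>\<phi>\<in>set fs'. norm_dominated_on (span S) \<phi>"
      using "1.prems"(2) Cons by auto
    obtain x\<^sub>1 where x\<^sub>1: "x\<^sub>1 \<notin> span S" "\<forall>\<phi>\<in>set fs'. \<forall>u\<in>span S. \<forall>t. \<phi> u \<le> norm (u + t *\<^sub>R x\<^sub>1)"
      using IH[of fs' S] "1.prems"(1) fs' Cons by auto
    obtain c\<^sub>1 where c\<^sub>1: "\<And>u t. u \<in> span S \<Longrightarrow> \<psi> u + t * c\<^sub>1 \<le> norm (u + t *\<^sub>R x\<^sub>1)"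
      using norm_dominated_extension_constant[OF subspace_span \<psi>] by blast
    then obtain \<psi>\<^sub>1 where \<psi>\<^sub>1: "norm_dominated_on (span (insert x\<^sub>1 S)) \<psi>\<^sub>1"
      "\<And>u t. u \<in> span S \<Longrightarrow> \<psi>\<^sub>1 (u + t *\<^sub>R x\<^sub>1) = \<psi> u + t * c\<^sub>1"
      using norm_dominated_extension[OF \<psi> x\<^sub>1(1)] by blast
    obtain ext where ext: "\<forall>\<phi>\<in>set fs'. norm_dominated_on (span (insert x\<^sub>1 S)) (ext \<phi>)"
      "\<forall>\<phi>\<in>set fs'. \<forall>u\<in>span S. \<forall>t. ext \<phi> (u + t *\<^sub>R x\<^sub>1) = \<phi> u"
      using norm_dominated_zero_extensions[of "set fs'" S x\<^sub>1] fs' x\<^sub>1 by blast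
    obtain x\<^sub>2 where x\<^sub>2: "x\<^sub>2 \<notin> span (insert x\<^sub>1 S)"
      "\<forall>\<phi>\<in>set (map ext fs'). \<forall>w\<in>span (insert x\<^sub>1 S). \<forall>t. \<phi> w \<le> norm (w + t *\<^sub>R x\<^sub>2)"
      using IH[of "map ext fs'" "insert x\<^sub>1 S"] "1.prems"(1) ext(1) Cons by auto
    obtain c\<^sub>2 where c\<^sub>2: "\<And>w t. w \<in> span (insert x\<^sub>1 S) \<Longrightarrow> \<psi>\<^sub>1 w + t * c\<^sub>2 \<le> norm (w + t *\<^sub>R x\<^sub>2)"
      using norm_dominated_extension_constant[OF subspace_span \<psi>\<^sub>1(1)] by blast
    have "\<forall>\<phi>\<in>set fs'. \<forall>w\<in>span (insert x\<^sub>1 S). \<forall>t. ext \<phi> w \<le> norm (w + t *\<^sub>R x\<^sub>2)"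
      using x\<^sub>2(2) by simp
    from common_zero_extension_direction_step[OF x\<^sub>1(1) x\<^sub>2(1) c\<^sub>1 \<psi>\<^sub>1(2) c\<^sub>2 x\<^sub>1(2) ext(2) this]
    show ?thesis using Cons by simp
  qed
qed

definition coordinates_bounded :: "(nat \<Rightarrow> 'a::real_normed_vector) \<Rightarrow> nat \<Rightarrow> bool" where
  "coordinates_bounded v n \<longleftrightarrow> (\<forall>c j. j < n \<longrightarrow> \<bar>c j\<bar> \<le> norm (\<Sum>i<n. c i *\<^sub>R v i))"

lemma coordinates_boundedD:
  "coordinates_bounded v n \<Longrightarrow> j < n \<Longrightarrow> \<bar>c j\<bar> \<le> norm (\<Sum>i<n. c i *\<^sub>R v i)"
  unfolding coordinates_bounded_def by blast

lemma coordinates_bounded_cong: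
  assumes "\<And>i. i < n \<Longrightarrow> v i = w i"
  shows "coordinates_bounded v n \<longleftrightarrow> coordinates_bounded w n"
proof -
  have "(\<Sum>i<n. c i *\<^sub>R v i) = (\<Sum>i<n. c i *\<^sub>R w i)" for c
    by (rule sum.cong) (simp_all add: assms)
  then show ?thesis unfolding coordinates_bounded_def by simp
qed

lemma span_image_lessThan:
  fixes v :: "nat \<Rightarrow> 'a::real_vector"
  shows "span (v ` {..<n}) = range (\<lambda>c. \<Sum>i<n. c i *\<^sub>R v i)"
proof
  show "span (v ` {..<n}) \<subseteq> range (\<lambda>c. \<Sum>i<n. c i *\<^sub>R v i)"
  proof (rule span_minimal)
    have "v j = (\<Sum>i<n. (if i = j then 1 else 0) *\<^sub>R v i)" if "j < n" for j
    proof -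
      have "v j = (\<Sum>i<n. if i = j then v i else 0)" using that by simp
      also have "\<dots> = (\<Sum>i<n. (if i = j then 1 else 0) *\<^sub>R v i)" by (rule sum.cong) auto
      finally show ?thesis .
    qed
    then show "v ` {..<n} \<subseteq> range (\<lambda>c. \<Sum>i<n. c i *\<^sub>R v i)"
      by (auto intro: range_eqI)
    show "subspace (range (\<lambda>c. \<Sum>i<n. c i *\<^sub>R v i))"
      unfolding subspace_def
    proof (safe)
      show "0 \<in> range (\<lambda>c. \<Sum>i<n. c i *\<^sub>R v i)"
        using rangeI[of "\<lambda>c. \<Sum>i<n. c i *\<^sub>R v i" "\<lambda>_. 0"] by simp
    next
      fix c d :: "nat \<Rightarrow> real"
      have "(\<Sum>i<n. c i *\<^sub>R v i) + (\<Sum>i<n. d i *\<^sub>R v i) = (\<Sum>i<n. (c i + d i) *\<^sub>R v i)"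
        by (simp add: scaleR_add_left sum.distrib)
      then show "(\<Sum>i<n. c i *\<^sub>R v i) + (\<Sum>i<n. d i *\<^sub>R v i) \<in> range (\<lambda>c. \<Sum>i<n. c i *\<^sub>R v i)"
        by (simp add: rangeI)
    next
      fix r and c :: "nat \<Rightarrow> real"
      have "r *\<^sub>R (\<Sum>i<n. c i *\<^sub>R v i) = (\<Sum>i<n. (r * c i) *\<^sub>R v i)"
        by (simp add: scaleR_sum_right)
      then show "r *\<^sub>R (\<Sum>i<n. c i *\<^sub>R v i) \<in> range (\<lambda>c. \<Sum>i<n. c i *\<^sub>R v i)"
        by (simp add: rangeI)
    qed
  qed
  show "range (\<lambda>c. \<Sum>i<n. c i *\<^sub>R v i) \<subseteq> span (v ` {..<n})"
    by (clarify, intro span_sum span_scale span_base) auto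
qed

lemma coordinates_bounded_unique:
  assumes "coordinates_bounded v n" "(\<Sum>i<n. c i *\<^sub>R v i) = (\<Sum>i<n. d i *\<^sub>R v i)" "j < n"
  shows "c j = d j"
proof -
  have "\<bar>c j - d j\<bar> \<le> norm (\<Sum>i<n. (c i - d i) *\<^sub>R v i)"
    using coordinates_boundedD[OF assms(1,3), of "\<lambda>i. c i - d i"] by simp
  also have "(\<Sum>i<n. (c i - d i) *\<^sub>R v i) = 0"
    using assms(2) by (simp add: scaleR_diff_left sum_subtractf)
  finally show ?thesis by simp
qed

text \<open>Only meaningful on the span, where \<open>coordinates_bounded v n\<close> makes the representation unique.\<close>
definition coordinate :: "(nat \<Rightarrow> 'a::real_vector) \<Rightarrow> nat \<Rightarrow> nat \<Rightarrow> 'a \<Rightarrow> real" where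
  "coordinate v n j y = (SOME c. y = (\<Sum>i<n. c i *\<^sub>R v i)) j"

lemma coordinate_sum:
  assumes "coordinates_bounded v n" "j < n"
  shows "coordinate v n j (\<Sum>i<n. c i *\<^sub>R v i) = c j"
proof -
  have "(\<Sum>i<n. c i *\<^sub>R v i) = (\<Sum>i<n. (SOME d. (\<Sum>i<n. c i *\<^sub>R v i) = (\<Sum>i<n. d i *\<^sub>R v i)) i *\<^sub>R v i)"
    by (rule someI[of "\<lambda>d. (\<Sum>i<n. c i *\<^sub>R v i) = (\<Sum>i<n. d i *\<^sub>R v i)" c]) (rule refl)
  from coordinates_bounded_unique[OF assms(1) this assms(2)] show ?thesis
    unfolding coordinate_def by simp
qed

lemma norm_dominated_on_coordinate:
  assumes "coordinates_bounded v n" "j < n"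
  shows "norm_dominated_on (span (v ` {..<n})) (coordinate v n j)"
  unfolding norm_dominated_on_def span_image_lessThan
proof (safe)
  fix c d :: "nat \<Rightarrow> real"
  have "(\<Sum>i<n. c i *\<^sub>R v i) + (\<Sum>i<n. d i *\<^sub>R v i) = (\<Sum>i<n. (c i + d i) *\<^sub>R v i)"
    by (simp add: scaleR_add_left sum.distrib)
  then show "coordinate v n j ((\<Sum>i<n. c i *\<^sub>R v i) + (\<Sum>i<n. d i *\<^sub>R v i)) =
      coordinate v n j (\<Sum>i<n. c i *\<^sub>R v i) + coordinate v n j (\<Sum>i<n. d i *\<^sub>R v i)"
    by (simp add: coordinate_sum[OF assms])
next
  fix r and c :: "nat \<Rightarrow> real"
  have "r *\<^sub>R (\<Sum>i<n. c i *\<^sub>R v i) = (\<Sum>i<n. (r * c i) *\<^sub>R v i)" by (simp add: scaleR_sum_right)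
  then show "coordinate v n j (r *\<^sub>R (\<Sum>i<n. c i *\<^sub>R v i)) = r * coordinate v n j (\<Sum>i<n. c i *\<^sub>R v i)"
    by (simp add: coordinate_sum[OF assms])
next
  fix c :: "nat \<Rightarrow> real"
  show "coordinate v n j (\<Sum>i<n. c i *\<^sub>R v i) \<le> norm (\<Sum>i<n. c i *\<^sub>R v i)"
  proof -
    have "\<bar>c j\<bar> \<le> norm (\<Sum>i<n. c i *\<^sub>R v i)" by (rule coordinates_boundedD[OF assms])
    then show ?thesis by (simp add: coordinate_sum[OF assms] abs_le_iff)
  qed
qed

lemma coordinates_bounded_extend_rescaled:
  fixes v :: "nat \<Rightarrow> 'a::real_normed_vector"
  assumes "x \<noteq> 0"
    and bound: "\<And>c t j. j < n \<Longrightarrow> \<bar>c j\<bar> \<le> norm ((\<Sum>i<n. c i *\<^sub>R v i) + t *\<^sub>R x)"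
  shows "coordinates_bounded (v(n := ((1 + (\<Sum>i<n. norm (v i))) / norm x) *\<^sub>R x)) (Suc n)"
  unfolding coordinates_bounded_def
proof (intro allI impI)
  fix c :: "nat \<Rightarrow> real" and j assume j: "j < Suc n"
  \<comment> \<open>\<open>\<parallel>u\<parallel> \<le> K \<parallel>u + t x\<parallel>\<close>, hence \<open>\<parallel>t x\<parallel> \<le> (1 + K) \<parallel>u + t x\<parallel>\<close>;
    the rescaling turns this into the new coordinate bound.\<close>
  define K where "K = (\<Sum>i<n. norm (v i))"
  define u where "u = (\<Sum>i<n. c i *\<^sub>R v i)"
  define t where "t = c n * (1 + K) / norm x"
  have "(\<Sum>i<n. c i *\<^sub>R (v(n := ((1 + K) / norm x) *\<^sub>R x)) i) = u"
    unfolding u_def by (rule sum.cong) auto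
  then have "(\<Sum>i<Suc n. c i *\<^sub>R (v(n := ((1 + K) / norm x) *\<^sub>R x)) i) = u + t *\<^sub>R x"
    by (simp add: t_def)
  moreover have "\<bar>c n\<bar> \<le> norm (u + t *\<^sub>R x)"
  proof -
    have "norm u \<le> (\<Sum>i<n. \<bar>c i\<bar> * norm (v i))"
      unfolding u_def by (rule order_trans[OF norm_sum]) simp
    also have "\<dots> \<le> (\<Sum>i<n. norm (u + t *\<^sub>R x) * norm (v i))"
      unfolding u_def by (intro sum_mono mult_right_mono bound) auto
    finally have "norm u \<le> norm (u + t *\<^sub>R x) * K" by (simp add: K_def sum_distrib_left)
    moreover have "norm (t *\<^sub>R x) \<le> norm (u + t *\<^sub>R x) + norm u"
      by (metis add_diff_cancel_left' norm_triangle_ineq4)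
    moreover have "norm (t *\<^sub>R x) = \<bar>c n\<bar> * (1 + K)"
      using \<open>x \<noteq> 0\<close> by (simp add: t_def K_def abs_mult sum_nonneg add_nonneg_pos)
    ultimately have "\<bar>c n\<bar> * (1 + K) \<le> norm (u + t *\<^sub>R x) * (1 + K)" by (simp add: algebra_simps)
    moreover have "0 < 1 + K" by (simp add: K_def add_pos_nonneg sum_nonneg)
    ultimately show ?thesis by simp
  qed
  ultimately show "\<bar>c j\<bar> \<le> norm (\<Sum>i<Suc n. c i *\<^sub>R (v(n := ((1 + K) / norm x) *\<^sub>R x)) i)"
    using j bound[of j c t] by (cases "j = n") (auto simp: u_def)
qed

lemma coordinates_bounded_extend:
  fixes v :: "nat \<Rightarrow> 'a::real_normed_vector"
  assumes inf: "infinite_dimensional TYPE('a)" and v: "coordinates_bounded v n"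
  obtains y where "coordinates_bounded (v(n := y)) (Suc n)"
proof -
  have "\<forall>\<phi>\<in>set (map (coordinate v n) [0..<n]). norm_dominated_on (span (v ` {..<n})) \<phi>"
    using norm_dominated_on_coordinate[OF v] by auto
  from exists_common_zero_extension_direction[OF inf finite_imageI[OF finite_lessThan] this]
  obtain x where x: "x \<notin> span (v ` {..<n})"
    "\<forall>\<phi>\<in>set (map (coordinate v n) [0..<n]). \<forall>u\<in>span (v ` {..<n}). \<forall>t. \<phi> u \<le> norm (u + t *\<^sub>R x)"
    by blast
  have "\<bar>c j\<bar> \<le> norm ((\<Sum>i<n. c i *\<^sub>R v i) + t *\<^sub>R x)" if "j < n" for c t j
  proof -
    define u where "u = (\<Sum>i<n. c i *\<^sub>R v i)"
    have u: "u \<in> span (v ` {..<n})" "- u \<in> span (v ` {..<n})"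
      unfolding u_def span_image_lessThan by (auto simp flip: sum_negf scaleR_minus_left)
    have x_bound: "coordinate v n j w \<le> norm (w + s *\<^sub>R x)" if "w \<in> span (v ` {..<n})" for w s
      using x(2) \<open>j < n\<close> that by simp
    have "c j \<le> norm (u + t *\<^sub>R x)"
      using x_bound[OF u(1)] coordinate_sum[OF v that] by (simp add: u_def)
    moreover have "- c j \<le> norm (- u + (- t) *\<^sub>R x)"
      using x_bound[OF u(2), of "- t"] norm_dominated_on_minus[OF norm_dominated_on_coordinate[OF v that] u(1)]
        coordinate_sum[OF v that] by (simp add: u_def)
    moreover have "norm (- u + (- t) *\<^sub>R x) = norm (u + t *\<^sub>R x)"
      by (metis minus_add_distrib norm_minus_cancel scaleR_minus_left)
    ultimately show ?thesis by (simp add: u_def abs_le_iff)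
  qed
  moreover have "x \<noteq> 0" using x(1) span_zero by blast
  ultimately show thesis using that coordinates_bounded_extend_rescaled by blast
qed

lemma exists_coordinates_bounded_sequence:
  assumes inf: "infinite_dimensional TYPE('a::real_normed_vector)"
  obtains v :: "nat \<Rightarrow> 'a::real_normed_vector" where "norm (v 0) = 1" "\<And>n. coordinates_bounded v n"
proof -
  obtain e :: 'a where "e \<notin> span {}" using inf unfolding infinite_dimensional_def by blast
  define e\<^sub>1 where "e\<^sub>1 = e /\<^sub>R norm e"
  have "norm e\<^sub>1 = 1" using \<open>e \<notin> span {}\<close> by (auto simp: e\<^sub>1_def)
  then have "coordinates_bounded (\<lambda>_. e\<^sub>1) (Suc 0)"
    unfolding coordinates_bounded_def by (simp add: abs_mult)
  with \<open>norm e\<^sub>1 = 1\<close> have "\<exists>w :: nat \<Rightarrow> 'a. norm (w 0) = 1 \<and> coordinates_bounded w (Suc 0)"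
    by (intro exI[of _ "\<lambda>_. e\<^sub>1"]) simp
  moreover have "\<exists>w'. (norm (w' 0) = 1 \<and> coordinates_bounded w' (Suc (Suc n))) \<and> (\<forall>i\<le>n. w' i = w i)"
    if w: "norm (w 0) = 1 \<and> coordinates_bounded w (Suc n)" for n and w :: "nat \<Rightarrow> 'a"
  proof -
    obtain y where "coordinates_bounded (w(Suc n := y)) (Suc (Suc n))"
      by (rule coordinates_bounded_extend[OF inf conjunct2[OF w]])
    with w show ?thesis by (intro exI[of _ "w(Suc n := y)"]) simp
  qed
  ultimately have "\<exists>f :: nat \<Rightarrow> nat \<Rightarrow> 'a. \<forall>n. (norm (f n 0) = 1 \<and> coordinates_bounded (f n) (Suc n)) \<and>
      (\<forall>i\<le>n. f (Suc n) i = f n i)"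
    by (rule dependent_nat_choice[where P = "\<lambda>n w. norm (w 0) = 1 \<and> coordinates_bounded w (Suc n)"
          and Q = "\<lambda>n w w'. \<forall>i\<le>n. w' i = w i"])
  then obtain f :: "nat \<Rightarrow> nat \<Rightarrow> 'a" where f: "\<And>n. norm (f n 0) = 1 \<and> coordinates_bounded (f n) (Suc n)"
    and f_stable: "\<And>n i. i \<le> n \<Longrightarrow> f (Suc n) i = f n i"
    by blast
  have f_diag: "f m i = f i i" if "i \<le> m" for m i
    using that by (induction m) (auto simp: f_stable le_Suc_eq)
  have "coordinates_bounded (\<lambda>i. f i i) n" for n
  proof (cases n)
    case (Suc k)
    have "f i i = f k i" if "i < Suc k" for i using f_diag that by (metis less_Suc_eq_le)
    with f[of k] Suc show ?thesis using coordinates_bounded_cong[of "Suc k" "\<lambda>i. f i i" "f k"] by simp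
  qed (simp add: coordinates_bounded_def)
  with f[of 0] show thesis using that[of "\<lambda>i. f i i"] by blast
qed

definition support :: "(nat \<Rightarrow> real) \<Rightarrow> nat set" where
  "support x = {i. x i \<noteq> 0}"

definition finite_simplex :: "(nat \<Rightarrow> real) set" where
  "finite_simplex = {x. finite (support x) \<and> (\<forall>i. 0 \<le> x i) \<and> sum x (support x) = 1}"

definition entropy :: "(nat \<Rightarrow> real) \<Rightarrow> real" where
  "entropy x = (\<Sum>i\<in>support x. - (x i * ln (x i)))"

definition entropy_embedding :: "'a::real_normed_vector \<Rightarrow> (nat \<Rightarrow> 'a) \<Rightarrow> (nat \<Rightarrow> real) \<Rightarrow> 'a" where
  "entropy_embedding e w x = entropy x *\<^sub>R e + (\<Sum>i\<in>support x. x i *\<^sub>R w i)"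

lemma sum_support_superset:
  assumes "finite T" "support x \<subseteq> T" "\<And>i. i \<in> T \<Longrightarrow> x i = 0 \<Longrightarrow> f i = 0"
  shows "(\<Sum>i\<in>support x. f i) = (\<Sum>i\<in>T. f i)"
  by (rule sum.mono_neutral_left) (use assms in \<open>auto simp: support_def\<close>)

lemma finite_simplex_sum:
  assumes "x \<in> finite_simplex" "finite T" "support x \<subseteq> T"
  shows "(\<Sum>i\<in>T. x i) = 1"
  using assms sum_support_superset[OF assms(2,3), of x] unfolding finite_simplex_def by simp

lemma entropy_superset:
  assumes "finite T" "support x \<subseteq> T"
  shows "entropy x = (\<Sum>i\<in>T. - (x i * ln (x i)))"
  unfolding entropy_def by (rule sum_support_superset[OF assms]) simp

lemma entropy_embedding_superset:
  assumes "finite T" "support x \<subseteq> T"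
  shows "entropy_embedding e w x = (\<Sum>i\<in>T. - (x i * ln (x i))) *\<^sub>R e + (\<Sum>i\<in>T. x i *\<^sub>R w i)"
  unfolding entropy_embedding_def entropy_superset[OF assms]
  by (simp add: sum_support_superset[OF assms, of "\<lambda>i. x i *\<^sub>R w i"])

lemma mixture_in_finite_simplex:
  assumes x: "x \<in> finite_simplex" and y: "y \<in> finite_simplex" and t: "0 \<le> t" "t \<le> 1"
  shows "(\<lambda>i. t * x i + (1 - t) * y i) \<in> finite_simplex"
proof -
  define T where "T = support x \<union> support y"
  have T: "finite T" "support x \<subseteq> T" "support y \<subseteq> T" "support (\<lambda>i. t * x i + (1 - t) * y i) \<subseteq> T"
    using x y unfolding T_def finite_simplex_def support_def by auto
  have "(\<Sum>i\<in>T. t * x i + (1 - t) * y i) = 1"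
    using finite_simplex_sum[OF x T(1,2)] finite_simplex_sum[OF y T(1,3)]
    by (simp add: sum.distrib flip: sum_distrib_left)
  moreover have "(\<Sum>i\<in>support (\<lambda>i. t * x i + (1 - t) * y i). t * x i + (1 - t) * y i) =
      (\<Sum>i\<in>T. t * x i + (1 - t) * y i)"
    by (rule sum_support_superset[OF T(1,4)]) simp
  ultimately show ?thesis
    using x y t T(1,4) unfolding finite_simplex_def by (auto intro: finite_subset)
qed

lemma weighted_log_ratio_bounds:
  fixes t a m :: real
  assumes "0 \<le> t" "t \<le> 1" "0 \<le> a" "t * a \<le> m"
  shows "t * (a - m) \<le> t * a * (ln a - ln m)" "t * a * (ln a - ln m) \<le> (1 - t) * a"
proof -
  consider "t = 0 \<or> a = 0" | "0 < t" "0 < a" using assms by fastforce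
  then have "t * (a - m) \<le> t * a * (ln a - ln m) \<and> t * a * (ln a - ln m) \<le> (1 - t) * a"
  proof cases
    case 1
    with assms show ?thesis by (auto simp: mult_nonneg_nonneg)
  next
    case 2
    have "0 < m" using mult_pos_pos[OF 2] assms(4) by linarith
    with 2 have "ln (m / a) \<le> m / a - 1" "ln (a / m) \<le> a / m - 1"
      by (simp_all add: ln_le_minus_one)
    then have "1 - m / a \<le> ln a - ln m" "ln a - ln m \<le> a / m - 1"
      using 2 \<open>0 < m\<close> by (simp_all add: ln_div)
    then have "t * a * (1 - m / a) \<le> t * a * (ln a - ln m)" "t * a * (ln a - ln m) \<le> t * a * (a / m - 1)"
      using 2 by (simp_all add: mult_left_mono)
    moreover have "t * a * (1 - m / a) = t * (a - m)" using 2 by (simp add: field_simps)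
    moreover have "t * a * (a / m - 1) = t * a * (a / m) - t * a" by (simp add: algebra_simps)
    moreover have "t * a * (a / m) \<le> a"
      using 2 \<open>0 < m\<close> assms(4) by (simp add: field_simps mult_left_mono)
    ultimately show ?thesis by (simp add: algebra_simps)
  qed
  then show "t * (a - m) \<le> t * a * (ln a - ln m)" "t * a * (ln a - ln m) \<le> (1 - t) * a" by auto
qed

lemma xlnx_mixture_bounds:
  fixes t a b :: real
  assumes "0 \<le> t" "t \<le> 1" "0 \<le> a" "0 \<le> b"
  defines "m \<equiv> t * a + (1 - t) * b"
  shows "0 \<le> t * (a * ln a) + (1 - t) * (b * ln b) - m * ln m"
    and "t * (a * ln a) + (1 - t) * (b * ln b) - m * ln m \<le> (1 - t) * a + t * b"
proof -
  have "t * (a * ln a) + (1 - t) * (b * ln b) - m * ln m = t * a * (ln a - ln m) + (1 - t) * b * (ln b - ln m)"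
    unfolding m_def by (simp add: algebra_simps)
  moreover have "t * (a - m) + (1 - t) * (b - m) = 0" unfolding m_def by (simp add: algebra_simps)
  moreover have "t * (a - m) \<le> t * a * (ln a - ln m)" "t * a * (ln a - ln m) \<le> (1 - t) * a"
    using weighted_log_ratio_bounds[of t a m] assms by (simp_all add: m_def mult_nonneg_nonneg)
  moreover have "(1 - t) * (b - m) \<le> (1 - t) * b * (ln b - ln m)" "(1 - t) * b * (ln b - ln m) \<le> t * b"
    using weighted_log_ratio_bounds[of "1 - t" b m] assms by (simp_all add: m_def mult_nonneg_nonneg)
  ultimately show "0 \<le> t * (a * ln a) + (1 - t) * (b * ln b) - m * ln m"
    and "t * (a * ln a) + (1 - t) * (b * ln b) - m * ln m \<le> (1 - t) * a + t * b"
    by linarith+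
qed

lemma entropy_mixture_defect:
  assumes x: "x \<in> finite_simplex" and y: "y \<in> finite_simplex" and t: "0 \<le> t" "t \<le> 1"
  defines "m \<equiv> \<lambda>i. t * x i + (1 - t) * y i"
  shows "0 \<le> entropy m - t * entropy x - (1 - t) * entropy y"
    and "entropy m - t * entropy x - (1 - t) * entropy y \<le> 1"
proof -
  define T where "T = support x \<union> support y"
  have T: "finite T" "support x \<subseteq> T" "support y \<subseteq> T" "support m \<subseteq> T"
    using x y unfolding T_def m_def finite_simplex_def support_def by auto
  define E where "E i = t * (x i * ln (x i)) + (1 - t) * (y i * ln (y i)) - m i * ln (m i)" for i
  have "entropy m - t * entropy x - (1 - t) * entropy y = (\<Sum>i\<in>T. E i)"
    unfolding entropy_superset[OF T(1,2)] entropy_superset[OF T(1,3)] entropy_superset[OF T(1,4)] E_def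
    by (simp add: sum_subtractf sum_negf sum_distrib_left sum.distrib)
  moreover have "0 \<le> E i" "E i \<le> (1 - t) * x i + t * y i" for i
    using xlnx_mixture_bounds[OF t, of "x i" "y i"] x y
    unfolding E_def m_def finite_simplex_def by auto
  then have "0 \<le> (\<Sum>i\<in>T. E i)" "(\<Sum>i\<in>T. E i) \<le> (\<Sum>i\<in>T. (1 - t) * x i + t * y i)"
    by (simp_all add: sum_nonneg sum_mono)
  moreover have "(\<Sum>i\<in>T. (1 - t) * x i + t * y i) = 1"
    using finite_simplex_sum[OF x T(1,2)] finite_simplex_sum[OF y T(1,3)]
    by (simp add: sum.distrib flip: sum_distrib_left)
  ultimately show "0 \<le> entropy m - t * entropy x - (1 - t) * entropy y"
    and "entropy m - t * entropy x - (1 - t) * entropy y \<le> 1" by simp_all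
qed

lemma entropy_embedding_mixture:
  fixes t :: real
  assumes x: "x \<in> finite_simplex" and y: "y \<in> finite_simplex"
  defines "m \<equiv> \<lambda>i. t * x i + (1 - t) * y i"
  shows "t *\<^sub>R entropy_embedding e w x + (1 - t) *\<^sub>R entropy_embedding e w y =
    entropy_embedding e w m - (entropy m - t * entropy x - (1 - t) * entropy y) *\<^sub>R e"
proof -
  define T where "T = support x \<union> support y"
  have T: "finite T" "support x \<subseteq> T" "support y \<subseteq> T" "support m \<subseteq> T"
    using x y unfolding T_def m_def finite_simplex_def support_def by auto
  have "t *\<^sub>R (\<Sum>i\<in>T. x i *\<^sub>R w i) + (1 - t) *\<^sub>R (\<Sum>i\<in>T. y i *\<^sub>R w i) = (\<Sum>i\<in>T. m i *\<^sub>R w i)"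
    unfolding m_def scaleR_sum_right sum.distrib[symmetric] by (rule sum.cong) (simp_all add: algebra_simps)
  then show ?thesis
    unfolding entropy_embedding_superset[OF T(1,2)] entropy_embedding_superset[OF T(1,3)]
      entropy_embedding_superset[OF T(1,4)] entropy_superset[OF T(1,2)] entropy_superset[OF T(1,3)]
      entropy_superset[OF T(1,4)]
    by (simp add: algebra_simps)
qed

lemma approx_convex_entropy_embedding:
  assumes "norm e \<le> 1"
  shows "approx_convex (entropy_embedding e w ` finite_simplex)"
  unfolding approx_convex_def
proof (clarify)
  fix x y and t :: real
  assume x: "x \<in> finite_simplex" and y: "y \<in> finite_simplex" and t: "0 \<le> t" "t \<le> 1"
  define m where "m = (\<lambda>i. t * x i + (1 - t) * y i)"
  define \<delta> where "\<delta> = entropy m - t * entropy x - (1 - t) * entropy y"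
  have "m \<in> finite_simplex" unfolding m_def by (rule mixture_in_finite_simplex[OF x y t])
  then have "infdist (t *\<^sub>R entropy_embedding e w x + (1 - t) *\<^sub>R entropy_embedding e w y)
      (entropy_embedding e w ` finite_simplex) \<le> norm (\<delta> *\<^sub>R e)"
    by (intro infdist_le2[where a = "entropy_embedding e w m"])
      (auto simp: entropy_embedding_mixture[OF x y] m_def \<delta>_def dist_norm)
  also have "\<dots> \<le> 1"
    using entropy_mixture_defect[OF x y t] assms
    by (auto simp: \<delta>_def m_def intro: mult_le_one)
  finally show "infdist (t *\<^sub>R entropy_embedding e w x + (1 - t) *\<^sub>R entropy_embedding e w y)
      (entropy_embedding e w ` finite_simplex) \<le> 1" .
qed

lemma finite_simplex_le_one:
  assumes "x \<in> finite_simplex"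
  shows "x i \<le> 1"
proof (cases "i \<in> support x")
  case True
  with assms have "x i \<le> sum x (support x)"
    unfolding finite_simplex_def by (intro member_le_sum) auto
  with assms show ?thesis unfolding finite_simplex_def by simp
qed (simp add: support_def)

lemma entropy_ge_near_uniform:
  assumes x: "x \<in> finite_simplex" and I: "finite I" "card I = m" "2 \<le> m"
    and near: "\<And>j. j \<in> I \<Longrightarrow> 1 / (2 * real m) < x j \<and> x j < 3 / (2 * real m)"
  shows "ln (2 * real m / 3) / 2 \<le> entropy x"
proof -
  have m: "0 < real m" "0 \<le> ln (2 * real m / 3)" using I(3) by simp_all
  have term_ge: "1 / (2 * real m) * ln (2 * real m / 3) \<le> - (x j * ln (x j))" if "j \<in> I" for j
  proof -
    from near[OF that] m have xj: "0 < x j" "1 / (2 * real m) \<le> x j" "2 * real m / 3 \<le> 1 / x j"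
      by (auto simp: field_simps order_less_trans[OF _ near[OF that, THEN conjunct1]])
    then have "ln (2 * real m / 3) \<le> ln (1 / x j)" using m by (subst ln_le_cancel_iff) auto
    then have "ln (2 * real m / 3) \<le> - ln (x j)" using xj by (simp add: ln_div)
    then have "1 / (2 * real m) * ln (2 * real m / 3) \<le> x j * - ln (x j)"
      using xj m by (intro mult_mono) auto
    then show ?thesis by simp
  qed
  have nonneg: "0 \<le> - (x i * ln (x i))" for i
  proof -
    have "0 \<le> x i" "x i \<le> 1" using x finite_simplex_le_one[OF x] unfolding finite_simplex_def by auto
    moreover from this have "ln (x i) \<le> 0" by (cases "x i = 0") auto
    ultimately show ?thesis by (simp add: mult_nonneg_nonpos)
  qed
  have "I \<subseteq> support x" using near m by (force simp: support_def)
  have "ln (2 * real m / 3) / 2 = (\<Sum>j\<in>I. 1 / (2 * real m) * ln (2 * real m / 3))" using I m by simp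
  also have "\<dots> \<le> (\<Sum>j\<in>I. - (x j * ln (x j)))" by (rule sum_mono[OF term_ge])
  also have "\<dots> \<le> entropy x"
    unfolding entropy_def using x \<open>I \<subseteq> support x\<close> nonneg
    by (intro sum_mono2) (auto simp: finite_simplex_def)
  finally show ?thesis .
qed

lemma entropy_embedding_vertex:
  "(\<lambda>k. if k = i then 1 else 0) \<in> finite_simplex"
  "entropy_embedding e w (\<lambda>k. if k = i then 1 else 0) = w i"
proof -
  have "support (\<lambda>k. if k = i then 1 else 0) = {i}" by (auto simp: support_def)
  then show "(\<lambda>k. if k = i then 1 else 0) \<in> finite_simplex"
    "entropy_embedding e w (\<lambda>k. if k = i then 1 else 0) = w i"
    by (simp_all add: finite_simplex_def entropy_embedding_def entropy_def)
qed

lemma le_infdistI: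
  assumes "A \<noteq> {}" "\<And>a. a \<in> A \<Longrightarrow> d \<le> dist x a"
  shows "d \<le> infdist x A"
  unfolding infdist_def using assms by (auto intro: cINF_greatest)

lemma hausdorff_ext_eq_infinity:
  assumes "\<And>n::nat. \<exists>z\<in>B. real n \<le> infdist z A"
  shows "hausdorff_ext A B = \<infinity>"
proof -
  have "(SUP z\<in>B. ereal (infdist z A)) = \<infinity>" by (rule SUP_PInfty) (use assms in auto)
  then show ?thesis unfolding hausdorff_ext_def by simp
qed

lemma dist_uniform_average_entropy_embedding:
  fixes e :: "'a::real_normed_vector" and w :: "nat \<Rightarrow> 'a"
  assumes e_bound: "\<And>T s c. finite T \<Longrightarrow> \<bar>s\<bar> \<le> norm (s *\<^sub>R e + (\<Sum>i\<in>T. c i *\<^sub>R w i))"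
    and w_bound: "\<And>T s c j. finite T \<Longrightarrow> j \<in> T \<Longrightarrow>
      \<bar>c j\<bar> * real (Suc j) \<le> norm (s *\<^sub>R e + (\<Sum>i\<in>T. c i *\<^sub>R w i))"
    and m: "2 \<le> m" and x: "x \<in> finite_simplex"
  shows "min (real (Suc p) / (2 * real m)) (ln (2 * real m / 3) / 2)
    \<le> dist (\<Sum>i\<in>{p..<p + m}. (1 / real m) *\<^sub>R w i) (entropy_embedding e w x)"
proof -
  define I where "I = {p..<p + m}"
  define T where "T = I \<union> support x"
  define c where "c i = (if i \<in> I then 1 / real m else 0) - x i" for i
  have T: "finite T" "I \<subseteq> T" "support x \<subseteq> T"
    using x by (auto simp: T_def I_def finite_simplex_def)
  have "(\<Sum>i\<in>I. (1 / real m) *\<^sub>R w i) = (\<Sum>i\<in>T. (if i \<in> I then 1 / real m else 0) *\<^sub>R w i)"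
    by (rule sum.mono_neutral_cong_left[OF T(1,2)]) auto
  then have dist_eq: "dist (\<Sum>i\<in>I. (1 / real m) *\<^sub>R w i) (entropy_embedding e w x) =
      norm ((- entropy x) *\<^sub>R e + (\<Sum>i\<in>T. c i *\<^sub>R w i))"
    unfolding dist_norm entropy_embedding_superset[OF T(1,3)] entropy_superset[OF T(1,3), symmetric] c_def
    by (simp add: scaleR_diff_left sum_subtractf algebra_simps)
  show ?thesis
  proof (cases "\<exists>j\<in>I. 1 / (2 * real m) \<le> \<bar>c j\<bar>")
    case True
    then obtain j where j: "j \<in> I" "1 / (2 * real m) \<le> \<bar>c j\<bar>" by blast
    then have "real (Suc p) \<le> real (Suc j)" by (simp add: I_def)
    with j(2) have "1 / (2 * real m) * real (Suc p) \<le> \<bar>c j\<bar> * real (Suc j)"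
      by (intro mult_mono) auto
    also have "\<dots> \<le> dist (\<Sum>i\<in>I. (1 / real m) *\<^sub>R w i) (entropy_embedding e w x)"
      unfolding dist_eq using j(1) T(2) by (intro w_bound[OF T(1)]) auto
    finally show ?thesis by (simp add: I_def min_le_iff_disj)
  next
    case False
    have "1 / (2 * real m) < x j \<and> x j < 3 / (2 * real m)" if "j \<in> I" for j
    proof -
      have "\<bar>1 / real m - x j\<bar> < 1 / (2 * real m)" using False that by (auto simp: c_def)
      moreover have "1 / real m - 1 / (2 * real m) = 1 / (2 * real m)"
        "1 / real m + 1 / (2 * real m) = 3 / (2 * real m)" using m by (simp_all add: field_simps)
      ultimately show ?thesis by (simp add: abs_less_iff)
    qed
    then have "ln (2 * real m / 3) / 2 \<le> entropy x"
      using entropy_ge_near_uniform[OF x _ _ m, of I] by (simp add: I_def)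
    also have "\<dots> \<le> dist (\<Sum>i\<in>I. (1 / real m) *\<^sub>R w i) (entropy_embedding e w x)"
      unfolding dist_eq using e_bound[OF T(1), of "- entropy x" c] by simp
    finally show ?thesis by (simp add: I_def min_le_iff_disj)
  qed
qed

lemma exists_far_point_convex_hull:
  fixes e :: "'a::real_normed_vector" and w :: "nat \<Rightarrow> 'a"
  assumes e_bound: "\<And>T s c. finite T \<Longrightarrow> \<bar>s\<bar> \<le> norm (s *\<^sub>R e + (\<Sum>i\<in>T. c i *\<^sub>R w i))"
    and w_bound: "\<And>T s c j. finite T \<Longrightarrow> j \<in> T \<Longrightarrow>
      \<bar>c j\<bar> * real (Suc j) \<le> norm (s *\<^sub>R e + (\<Sum>i\<in>T. c i *\<^sub>R w i))"
  shows "\<exists>z\<in>convex hull (entropy_embedding e w ` finite_simplex).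
    real n \<le> infdist z (entropy_embedding e w ` finite_simplex)"
proof -
  define A where "A = entropy_embedding e w ` finite_simplex"
  have vertex: "w i \<in> A" for i
    unfolding A_def using entropy_embedding_vertex by (metis image_eqI)
  obtain m :: nat where m: "2 * exp (2 * real n) < m" using reals_Archimedean2 by blast
  moreover have "1 \<le> exp (2 * real n)" by simp
  ultimately have m2: "2 \<le> m" and "exp (2 * real n) \<le> 2 * real m / 3" by linarith+
  then have "2 * real n \<le> ln (2 * real m / 3)" by (subst ln_ge_iff) auto
  then have n_le_entropy: "real n \<le> ln (2 * real m / 3) / 2" by simp
  define p where "p = 2 * m * n"
  have n_le_vertex: "real n \<le> real (Suc p) / (2 * real m)" using m2 by (simp add: p_def field_simps)
  define z where "z = (\<Sum>i\<in>{p..<p + m}. (1 / real m) *\<^sub>R w i)"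
  have "z \<in> convex hull A"
    unfolding z_def using m2 vertex by (intro convex_sum convex_convex_hull hull_inc) auto
  moreover have "real n \<le> infdist z A"
  proof (rule le_infdistI)
    show "A \<noteq> {}" using vertex by blast
    fix a assume "a \<in> A"
    then obtain x where "x \<in> finite_simplex" "a = entropy_embedding e w x" unfolding A_def by blast
    have "real n \<le> min (real (Suc p) / (2 * real m)) (ln (2 * real m / 3) / 2)"
      using n_le_vertex n_le_entropy by simp
    also have "\<dots> \<le> dist z a"
      unfolding z_def \<open>a = entropy_embedding e w x\<close>
      by (rule dist_uniform_average_entropy_embedding[OF e_bound w_bound m2 \<open>x \<in> finite_simplex\<close>])
    finally show "real n \<le> dist z a" .
  qed
  ultimately show ?thesis unfolding A_def by blast
qed

lemma coordinates_bounded_sum_le: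
  assumes "\<And>n. coordinates_bounded v n" "finite K" "k \<in> K"
  shows "\<bar>d k\<bar> \<le> norm (\<Sum>i\<in>K. d i *\<^sub>R v i)"
proof -
  obtain M where M: "K \<subseteq> {..<M}" using finite_nat_bounded[OF assms(2)] by blast
  then have "(\<Sum>i\<in>K. d i *\<^sub>R v i) = (\<Sum>i<M. (if i \<in> K then d i else 0) *\<^sub>R v i)"
    by (intro sum.mono_neutral_cong_left) auto
  with coordinates_boundedD[OF assms(1), of k M "\<lambda>i. if i \<in> K then d i else 0"] assms(3) M
  show ?thesis by auto
qed

lemma coordinates_bounded_shifted_sum:
  assumes "\<And>n. coordinates_bounded v n" "finite T"
  shows "\<bar>s\<bar> \<le> norm (s *\<^sub>R v 0 + (\<Sum>i\<in>T. c i *\<^sub>R real (Suc i) *\<^sub>R v (Suc i)))"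
    and "j \<in> T \<Longrightarrow> \<bar>c j\<bar> * real (Suc j) \<le> norm (s *\<^sub>R v 0 + (\<Sum>i\<in>T. c i *\<^sub>R real (Suc i) *\<^sub>R v (Suc i)))"
proof -
  define d where "d k = (if k = 0 then s else c (k - 1) * real k)" for k
  have sum_eq: "s *\<^sub>R v 0 + (\<Sum>i\<in>T. c i *\<^sub>R real (Suc i) *\<^sub>R v (Suc i)) =
      (\<Sum>k\<in>insert 0 (Suc ` T). d k *\<^sub>R v k)"
    using assms(2) by (simp add: d_def sum.reindex)
  have K: "finite (insert 0 (Suc ` T))" using assms(2) by simp
  show "\<bar>s\<bar> \<le> norm (s *\<^sub>R v 0 + (\<Sum>i\<in>T. c i *\<^sub>R real (Suc i) *\<^sub>R v (Suc i)))"
    using coordinates_bounded_sum_le[OF assms(1) K insertI1, of d] unfolding sum_eq by (simp add: d_def)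
  assume "j \<in> T"
  then have "Suc j \<in> insert 0 (Suc ` T)" by simp
  from coordinates_bounded_sum_le[OF assms(1) K this, of d]
  show "\<bar>c j\<bar> * real (Suc j) \<le> norm (s *\<^sub>R v 0 + (\<Sum>i\<in>T. c i *\<^sub>R real (Suc i) *\<^sub>R v (Suc i)))"
    unfolding sum_eq by (simp add: d_def abs_mult)
qed

theorem theorem3p3:
  assumes "infinite_dimensional TYPE('a::real_normed_vector)"
  shows "\<exists>A::'a set. A \<noteq> {} \<and> approx_convex A \<and> hausdorff_ext A (convex hull A) = \<infinity>"
proof -
  obtain v :: "nat \<Rightarrow> 'a" where v: "norm (v 0) = 1" "\<And>n. coordinates_bounded v n"
    using exists_coordinates_bounded_sequence[OF assms] by blast
  define w where "w i = real (Suc i) *\<^sub>R v (Suc i)" for i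
  define A where "A = entropy_embedding (v 0) w ` finite_simplex"
  have "A \<noteq> {}" using entropy_embedding_vertex(1) unfolding A_def by blast
  moreover have "approx_convex A" unfolding A_def using v(1) by (simp add: approx_convex_entropy_embedding)
  moreover have "hausdorff_ext A (convex hull A) = \<infinity>"
    unfolding A_def w_def
    by (intro hausdorff_ext_eq_infinity exists_far_point_convex_hull coordinates_bounded_shifted_sum v(2))
  ultimately show ?thesis by blast
qed

end
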